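(* There is a constant $c>0$ such that the following holds for all $n\ge 2$. Let $t$ be a qubit and $c_1,\dots,c_n$ qubits different from $t$. Let $U_1,\dots,U_n$ be $2\times 2$ unitaries that mutually commute ($U_iU_j=U_jU_i$ for all $i,j$), and let $G_i$ be the controlled-$U_i$ gate with control $c_i$ and target $t$. Then the operator $G_nG_{n-1}\cdots G_1$ can be embedded, using at most $cn$ ancillae, in a quantum circuit of depth at most $c\log n$.
   Context: Qubits have computational basis $|0\rangle,|1\rangle$. For a $2\times2$ unitary $U$, the controlled-$U$ gate on (control, target) is $\begin{pmatrix}I&0\\0&U\end{pmatrix}$, applying $U$ to the target when the control is $|1\rangle$. A one-layer circuit is a tensor product of arbitrary one-qubit and two-qubit unitary gates acting on pairwise disjoint sets of qubits; a circuit of depth $k$ is a product of $k$ one-layer circuits. An operator $F$ on $n'$ qubits is embedded in an operator $M$ on $n'+m$ qubits using $m$ ancillae if $M(|\psi\rangle\otimes|0\cdots0\rangle)=(F|\psi\rangle)\otimes|0\cdots0\rangle$ for all $|\psi\rangle$, where the last $m$ qubits are the ancillae. *)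

theory Defs
  imports Complex_Main
begin

text \<open>Computational basis states of a register: bit assignments to qubit labels 0,1,2,...;
  the basis of an N-qubit register consists of assignments vanishing outside {0..<N}.\<close>
type_synonym bits = "nat \<Rightarrow> bool"

definition basis :: "nat \<Rightarrow> bits set" where
  "basis N = {x. \<forall>i. N \<le> i \<longrightarrow> \<not> x i}"

text \<open>Operators given by matrix entries M x y = <x|M|y>; only entries on the basis matter.\<close>
type_synonym qop = "bits \<Rightarrow> bits \<Rightarrow> complex"

definition apply_op :: "nat \<Rightarrow> qop \<Rightarrow> (bits \<Rightarrow> complex) \<Rightarrow> (bits \<Rightarrow> complex)" where
  "apply_op N M v = (\<lambda>x. \<Sum>y\<in>basis N. M x y * v y)"

definition op_mult :: "nat \<Rightarrow> qop \<Rightarrow> qop \<Rightarrow> qop" where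
  "op_mult N A B = (\<lambda>x y. \<Sum>z\<in>basis N. A x z * B z y)"

definition op_id :: qop where
  "op_id = (\<lambda>x y. if x = y then 1 else 0)"

definition op_prod :: "nat \<Rightarrow> qop list \<Rightarrow> qop" where
  "op_prod N As = foldr (op_mult N) As op_id"

type_synonym smat = "nat \<Rightarrow> nat \<Rightarrow> complex"

definition smat_mult :: "nat \<Rightarrow> smat \<Rightarrow> smat \<Rightarrow> smat" where
  "smat_mult d A B = (\<lambda>i j. \<Sum>k<d. A i k * B k j)"

definition unitary_smat :: "nat \<Rightarrow> smat \<Rightarrow> bool" where
  "unitary_smat d U \<longleftrightarrow>
     (\<forall>i<d. \<forall>j<d. (\<Sum>k<d. cnj (U k i) * U k j) = (if i = j then 1 else 0)) \<and>
     (\<forall>i<d. \<forall>j<d. (\<Sum>k<d. U i k * cnj (U j k)) = (if i = j then 1 else 0))"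

text \<open>Index of the local basis state of the qubits qs (first listed qubit = most significant bit).\<close>
fun enc :: "nat list \<Rightarrow> bits \<Rightarrow> nat" where
  "enc [] x = 0"
| "enc (q # qs) x = (if x q then 2 ^ length qs else 0) + enc qs x"

text \<open>A gate: the (ordered) qubits it acts on, and its local matrix.\<close>
type_synonym gate = "nat list \<times> smat"

definition valid_gate :: "nat \<Rightarrow> gate \<Rightarrow> bool" where
  "valid_gate N g \<longleftrightarrow> distinct (fst g) \<and> 1 \<le> length (fst g) \<and> length (fst g) \<le> 2 \<and>
     set (fst g) \<subseteq> {..<N} \<and> unitary_smat (2 ^ length (fst g)) (snd g)"

definition valid_layer :: "nat \<Rightarrow> gate list \<Rightarrow> bool" where
  "valid_layer N gs \<longleftrightarrow> (\<forall>g\<in>set gs. valid_gate N g) \<and>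
     (\<forall>i<length gs. \<forall>j<length gs. i \<noteq> j \<longrightarrow> set (fst (gs ! i)) \<inter> set (fst (gs ! j)) = {})"

text \<open>The tensor product of the gates of a layer (identity on untouched qubits).\<close>
definition layer_op :: "gate list \<Rightarrow> qop" where
  "layer_op gs = (\<lambda>x y.
     if (\<forall>q. q \<notin> (\<Union>g\<in>set gs. set (fst g)) \<longrightarrow> x q = y q)
     then (\<Prod>g\<leftarrow>gs. snd g (enc (fst g) x) (enc (fst g) y)) else 0)"

text \<open>A circuit is a list of layers; its depth is the number of layers.\<close>
definition valid_circuit :: "nat \<Rightarrow> gate list list \<Rightarrow> bool" where
  "valid_circuit N Ls \<longleftrightarrow> (\<forall>L\<in>set Ls. valid_layer N L)"

definition circuit_op :: "nat \<Rightarrow> gate list list \<Rightarrow> qop" where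
  "circuit_op N Ls = op_prod N (map layer_op Ls)"

text \<open>Controlled-U on (control, target): block matrix diag(I, U).\<close>
definition controlled :: "smat \<Rightarrow> smat" where
  "controlled U = (\<lambda>i j. if i < 2 \<and> j < 2 then (if i = j then 1 else 0)
                         else if 2 \<le> i \<and> i < 4 \<and> 2 \<le> j \<and> j < 4 then U (i - 2) (j - 2) else 0)"

definition cgate_op :: "nat \<Rightarrow> nat \<Rightarrow> smat \<Rightarrow> qop" where
  "cgate_op c t U = layer_op [([c, t], controlled U)]"

text \<open>psi tensor |0...0> with the m ancillae being qubits n', ..., n'+m-1.\<close>
definition with_ancillae :: "nat \<Rightarrow> nat \<Rightarrow> (bits \<Rightarrow> complex) \<Rightarrow> (bits \<Rightarrow> complex)" where
  "with_ancillae n' m psi = (\<lambda>y. if (\<forall>i\<in>{n'..<n'+m}. \<not> y i) then psi y else 0)"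

definition embeds :: "nat \<Rightarrow> qop \<Rightarrow> nat \<Rightarrow> qop \<Rightarrow> bool" where
  "embeds n' F m M \<longleftrightarrow>
     (\<forall>psi. \<forall>x\<in>basis (n' + m).
        apply_op (n' + m) M (with_ancillae n' m psi) x =
        with_ancillae n' m (apply_op n' F psi) x)"

end

(*
  Commuting 2x2 unitaries are simultaneously diagonalisable, U_i = V diag(L_i) V^*, so
  G_n ... G_1 acts on the target t as V D V^*, where D is diagonal with entries
  prod {L_i(b) | control c_i is set}, b = 0, 1. After V^* on t, D is a phase on basis
  states depending only on the controls and the target bit b. A CNOT tree of depth
  O(log n) copies b into n fresh ancillae; a single layer of disjoint controlled-phase
  gates, one per distinct control qubit q paired with its own ancilla, then applies all
  the phases at once. Undoing the fan-out returns the ancillae to |0>, and V on t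
  completes the circuit: depth 2 log n + O(1) with n ancillae.
*)
theory Submission
  imports Defs
begin

lemma sum_lessThan_2: "(\<Sum>k<(2::nat). f k) = f 0 + f 1"
  by (simp add: numeral_2_eq_2)

lemma all_lessThan_2: "(\<forall>a<(2::nat). P a) \<longleftrightarrow> P 0 \<and> P 1"
  by (auto simp: numeral_2_eq_2 less_Suc_eq)

lemma sum_lessThan_4: "(\<Sum>k<(4::nat). f k) = f 0 + f 1 + f 2 + f 3"
  by (simp add: numeral_eq_Suc)

lemma all_lessThan_4: "(\<forall>a<(4::nat). P a) \<longleftrightarrow> P 0 \<and> P 1 \<and> P 2 \<and> P 3"
  by (auto simp: numeral_eq_Suc less_Suc_eq)

lemma prod_of_bool: "finite A \<Longrightarrow> (\<Prod>x\<in>A. of_bool (P x)) = (of_bool (\<forall>x\<in>A. P x) :: 'a::comm_semiring_1)"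
  by (induction A rule: finite_induct) auto

lemma prod_group_by:
  fixes f :: "nat \<Rightarrow> 'a::comm_monoid_mult"
  assumes "finite S" "distinct qs" "set qs = c ` S"
  shows "(\<Prod>i\<in>S. if x (c i) then f i else 1)
       = (\<Prod>j<length qs. if x (qs ! j) then \<Prod>i\<in>{i\<in>S. c i = qs ! j}. f i else 1)"
proof -
  have "(\<Prod>i\<in>S. if x (c i) then f i else 1) = (\<Prod>q\<in>c ` S. \<Prod>i\<in>{i\<in>S. c i = q}. if x (c i) then f i else 1)"
    by (rule prod.image_gen[OF assms(1)])
  also have "\<dots> = (\<Prod>q\<in>set qs. if x q then \<Prod>i\<in>{i\<in>S. c i = q}. f i else 1)"
    unfolding assms(3) by (rule prod.cong) auto
  also have "\<dots> = (\<Prod>j<length qs. if x (qs ! j) then \<Prod>i\<in>{i\<in>S. c i = qs ! j}. f i else 1)"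
    by (rule prod.reindex_bij_betw[OF bij_betw_nth[OF assms(2) refl refl], symmetric])
  finally show ?thesis .
qed

lemma fold_rev_involutions:
  "(\<And>f y. f \<in> set fs \<Longrightarrow> f (f y) = y) \<Longrightarrow> fold (\<lambda>f. f) (rev fs) (fold (\<lambda>f. f) fs x) = x"
  by (induction fs arbitrary: x) auto

section \<open>Operators on the computational basis\<close>

lemma finite_basis: "finite (basis N)"
proof -
  have "basis N \<subseteq> (\<lambda>S i. i \<in> S) ` Pow {..<N}"
  proof
    fix x assume "x \<in> basis N"
    then have "x = (\<lambda>i. i \<in> {i. i < N \<and> x i})" by (auto simp: basis_def not_le[symmetric])
    then show "x \<in> (\<lambda>S i. i \<in> S) ` Pow {..<N}" by blast
  qed
  then show ?thesis by (rule finite_subset) auto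
qed

lemma basis_fun_upd: "t < N \<Longrightarrow> x \<in> basis N \<Longrightarrow> x(t := k) \<in> basis N"
  by (auto simp: basis_def)

lemma basis_of_ancillae_zero:
  assumes "x \<in> basis (n' + m)" "\<forall>i\<in>{n'..<n' + m}. \<not> x i"
  shows "x \<in> basis n'"
  unfolding basis_def
proof (intro CollectI allI impI)
  fix i assume "n' \<le> i"
  then show "\<not> x i"
    using assms unfolding basis_def by (cases "i < n' + m") auto
qed

lemma with_ancillae_cong:
  "x \<in> basis (n' + m) \<Longrightarrow> (\<And>y. y \<in> basis n' \<Longrightarrow> f y = g y) \<Longrightarrow>
   with_ancillae n' m f x = with_ancillae n' m g x"
  unfolding with_ancillae_def using basis_of_ancillae_zero by auto

lemma apply_op_cong:
  "(\<And>y. y \<in> basis N \<Longrightarrow> v y = w y) \<Longrightarrow> apply_op N A v x = apply_op N A w x"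
  unfolding apply_op_def by (auto intro!: sum.cong)

lemma apply_op_op_mult: "apply_op N (op_mult N A B) v x = apply_op N A (apply_op N B v) x"
proof -
  have "apply_op N (op_mult N A B) v x = (\<Sum>y\<in>basis N. \<Sum>z\<in>basis N. A x z * B z y * v y)"
    unfolding apply_op_def op_mult_def by (simp add: sum_distrib_right)
  also have "\<dots> = (\<Sum>z\<in>basis N. \<Sum>y\<in>basis N. A x z * B z y * v y)"
    by (rule sum.swap)
  also have "\<dots> = apply_op N A (apply_op N B v) x"
    unfolding apply_op_def by (simp add: sum_distrib_left mult.assoc)
  finally show ?thesis .
qed

definition perm_op :: "(bits \<Rightarrow> bits) \<Rightarrow> qop" where
  "perm_op f = (\<lambda>x y. of_bool (y = f x))"

definition diag_op :: "(bits \<Rightarrow> complex) \<Rightarrow> qop" where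
  "diag_op d = (\<lambda>x y. if y = x then d x else 0)"

lemma apply_op_perm_op: "f x \<in> basis N \<Longrightarrow> apply_op N (perm_op f) v x = v (f x)"
  unfolding apply_op_def perm_op_def of_bool_def
  by (simp add: finite_basis if_distrib[of "\<lambda>c. c * _"] cong: if_cong)

lemma apply_op_diag_op: "x \<in> basis N \<Longrightarrow> apply_op N (diag_op d) v x = d x * v x"
  unfolding apply_op_def diag_op_def
  by (simp add: finite_basis if_distrib[of "\<lambda>c. c * _"] cong: if_cong)

lemma op_id_eq_perm_op: "op_id = perm_op (\<lambda>x. x)"
  unfolding op_id_def perm_op_def by (auto simp: fun_eq_iff)

lemma apply_op_op_prod_Nil: "x \<in> basis N \<Longrightarrow> apply_op N (op_prod N []) v x = v x"
  by (simp add: op_prod_def op_id_eq_perm_op apply_op_perm_op)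

lemma apply_op_op_prod_Cons:
  "apply_op N (op_prod N (A # As)) v x = apply_op N A (apply_op N (op_prod N As) v) x"
  by (simp add: op_prod_def apply_op_op_mult)

lemma apply_op_op_prod_append:
  "x \<in> basis N \<Longrightarrow>
   apply_op N (op_prod N (As @ Bs)) v x = apply_op N (op_prod N As) (apply_op N (op_prod N Bs) v) x"
proof (induction As arbitrary: x)
  case Nil
  then show ?case by (simp add: apply_op_op_prod_Nil)
next
  case (Cons A As)
  then show ?case
    by (simp add: apply_op_op_prod_Cons) (rule apply_op_cong, simp)
qed

lemma apply_op_op_prod_perm_ops:
  assumes "\<And>f y. f \<in> set fs \<Longrightarrow> y \<in> basis N \<Longrightarrow> f y \<in> basis N" "x \<in> basis N"
  shows "apply_op N (op_prod N (map perm_op fs)) v x = v (fold (\<lambda>f. f) fs x)"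
  using assms
proof (induction fs arbitrary: x)
  case Nil
  then show ?case by (simp add: apply_op_op_prod_Nil)
next
  case (Cons f fs)
  then show ?case
    by (simp add: apply_op_op_prod_Cons apply_op_perm_op)
qed

lemma apply_op_diag_op_conj_perms:
  assumes "\<And>f y. f \<in> set fs \<Longrightarrow> y \<in> basis N \<Longrightarrow> f y \<in> basis N"
    and "\<And>f y. f \<in> set fs \<Longrightarrow> f (f y) = y" and "x \<in> basis N"
  shows "apply_op N (op_prod N (map perm_op fs @ diag_op d # map perm_op (rev fs))) v x
       = d (fold (\<lambda>f. f) fs x) * v x"
proof -
  let ?y = "fold (\<lambda>f. f) fs x"
  have y: "?y \<in> basis N"
    using assms(1,3) by (induction fs arbitrary: x) auto
  have "apply_op N (op_prod N (map perm_op fs @ diag_op d # map perm_op (rev fs))) v x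
      = apply_op N (op_prod N (diag_op d # map perm_op (rev fs))) v ?y"
    using assms by (simp add: apply_op_op_prod_append apply_op_op_prod_perm_ops)
  also have "\<dots> = d ?y * v (fold (\<lambda>f. f) (rev fs) ?y)"
    using apply_op_op_prod_perm_ops[of "rev fs", OF _ y] assms(1) y
    by (simp add: apply_op_op_prod_Cons apply_op_diag_op)
  also have "fold (\<lambda>f. f) (rev fs) ?y = x"
    using assms(2) by (rule fold_rev_involutions)
  finally show ?thesis .
qed

section \<open>Operators on a single target qubit\<close>

definition smat_id :: smat where
  "smat_id = (\<lambda>i j. if i = j then 1 else 0)"

definition on_qubit :: "nat \<Rightarrow> (bits \<Rightarrow> smat) \<Rightarrow> qop" where
  "on_qubit t M =
     (\<lambda>x y. if \<forall>q. q \<noteq> t \<longrightarrow> x q = y q then M x (of_bool (x t)) (of_bool (y t)) else 0)"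

lemma apply_op_on_qubit:
  assumes "t < N" "x \<in> basis N"
  shows "apply_op N (on_qubit t M) v x = (\<Sum>k\<in>UNIV. M x (of_bool (x t)) (of_bool k) * v (x(t := k)))"
proof -
  let ?g = "\<lambda>y. M x (of_bool (x t)) (of_bool (y t)) * v y"
  have "apply_op N (on_qubit t M) v x = (\<Sum>y\<in>{y\<in>basis N. \<forall>q. q \<noteq> t \<longrightarrow> x q = y q}. ?g y)"
    unfolding apply_op_def on_qubit_def
    by (simp add: finite_basis if_distrib[of "\<lambda>c. c * _"] sum.inter_filter cong: if_cong)
  also have "{y\<in>basis N. \<forall>q. q \<noteq> t \<longrightarrow> x q = y q} = range (\<lambda>k. x(t := k))"
  proof (intro set_eqI iffI)
    fix y assume "y \<in> {y\<in>basis N. \<forall>q. q \<noteq> t \<longrightarrow> x q = y q}"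
    then have "y = x(t := y t)" by (auto simp: fun_eq_iff)
    then show "y \<in> range (\<lambda>k. x(t := k))" by blast
  qed (use assms basis_fun_upd in auto)
  also have "sum ?g (range (\<lambda>k. x(t := k))) = (\<Sum>k\<in>UNIV. ?g (x(t := k)))"
    by (rule sum.reindex_cong[OF _ refl refl]) (auto intro!: injI dest: fun_cong[of _ _ t])
  finally show ?thesis by simp
qed

lemma apply_op_on_qubit_cong:
  assumes "t < N" "x \<in> basis N" "\<And>a b. a < 2 \<Longrightarrow> b < 2 \<Longrightarrow> A x a b = B x a b"
  shows "apply_op N (on_qubit t A) v x = apply_op N (on_qubit t B) v x"
  using assms by (simp add: apply_op_on_qubit)

lemma apply_op_on_qubit_mult:
  assumes "t < N" "x \<in> basis N" "\<And>k. B (x(t := k)) = B x"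
  shows "apply_op N (on_qubit t A) (apply_op N (on_qubit t B) v) x
       = apply_op N (on_qubit t (\<lambda>y. smat_mult 2 (A y) (B y))) v x"
  using assms
  by (simp add: apply_op_on_qubit basis_fun_upd UNIV_bool smat_mult_def sum_lessThan_2 algebra_simps)

lemma apply_op_op_prod_on_qubit:
  assumes "t < N" "x \<in> basis N" "\<And>A y k. A \<in> set As \<Longrightarrow> A (y(t := k)) = A y"
  shows "apply_op N (op_prod N (map (on_qubit t) As)) v x
       = apply_op N (on_qubit t (\<lambda>y. foldr (smat_mult 2) (map (\<lambda>A. A y) As) smat_id)) v x"
  using assms(2,3)
proof (induction As arbitrary: x)
  case Nil
  then show ?case
    using assms(1) by (simp add: apply_op_op_prod_Nil apply_op_on_qubit UNIV_bool smat_id_def fun_upd_idem)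
next
  case (Cons A As)
  have "apply_op N (op_prod N (map (on_qubit t) (A # As))) v x
      = apply_op N (on_qubit t A)
          (apply_op N (on_qubit t (\<lambda>y. foldr (smat_mult 2) (map (\<lambda>A. A y) As) smat_id)) v) x"
    using Cons by (simp add: apply_op_op_prod_Cons) (rule apply_op_cong, simp)
  also have "\<dots> = apply_op N (on_qubit t
      (\<lambda>y. smat_mult 2 (A y) (foldr (smat_mult 2) (map (\<lambda>A. A y) As) smat_id))) v x"
    by (rule apply_op_on_qubit_mult[OF assms(1) Cons.prems(1)]) (simp add: Cons.prems(2) cong: map_cong)
  finally show ?case by simp
qed

lemma layer_op_single_qubit: "layer_op [([t], V)] = on_qubit t (\<lambda>_. V)"
  by (auto simp: fun_eq_iff layer_op_def on_qubit_def)

lemma valid_layer_single_qubit: "t < N \<Longrightarrow> unitary_smat 2 V \<Longrightarrow> valid_layer N [([t], V)]"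
  unfolding valid_layer_def valid_gate_def by simp

lemma cgate_op_eq_on_qubit:
  assumes "c \<noteq> t"
  shows "cgate_op c t U = on_qubit t (\<lambda>x. if x c then U else smat_id)"
proof (intro ext)
  fix x y :: bits
  define others_agree where "others_agree \<longleftrightarrow> (\<forall>q. q \<notin> {c, t} \<longrightarrow> x q = y q)"
  have agree: "(\<forall>q. q \<noteq> t \<longrightarrow> x q = y q) \<longleftrightarrow> others_agree \<and> x c = y c"
    using assms unfolding others_agree_def by auto
  have layer: "layer_op [([c, t], controlled U)] x y =
    (if others_agree then controlled U (enc [c, t] x) (enc [c, t] y) else 0)"
    unfolding layer_op_def others_agree_def by simp blast
  have ctrl: "controlled U (enc [c, t] x) (enc [c, t] y) =
    (if x c = y c then (if x c then U else smat_id) (of_bool (x t)) (of_bool (y t)) else 0)"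
    unfolding controlled_def smat_id_def
    by (cases "x c"; cases "y c"; cases "x t"; cases "y t") simp_all
  show "cgate_op c t U x y = on_qubit t (\<lambda>x. if x c then U else smat_id) x y"
    unfolding cgate_op_def on_qubit_def layer ctrl agree by simp
qed

section \<open>Layers of two-qubit gates\<close>

lemma enc_two: "enc [p, q] x = (if x p then 2 else 0) + (if x q then 1 else 0)"
  by simp

lemma layer_op_two_qubit_gates:
  assumes "distinct js"
  shows "layer_op (map (\<lambda>j. ([a j, b j], M j)) js) x y =
    (if \<forall>q. q \<notin> (\<Union>j\<in>set js. {a j, b j}) \<longrightarrow> x q = y q
     then \<Prod>j\<in>set js. M j (enc [a j, b j] x) (enc [a j, b j] y) else 0)"
proof -
  have "(\<Union>g\<in>set (map (\<lambda>j. ([a j, b j], M j)) js). set (fst g)) = (\<Union>j\<in>set js. {a j, b j})"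
    by auto
  moreover have "(\<Prod>g\<leftarrow>map (\<lambda>j. ([a j, b j], M j)) js. snd g (enc (fst g) x) (enc (fst g) y))
       = (\<Prod>j\<in>set js. M j (enc [a j, b j] x) (enc [a j, b j] y))"
    using assms by (simp add: prod.distinct_set_conv_list comp_def)
  ultimately show ?thesis
    unfolding layer_op_def by presburger
qed

lemma valid_layer_two_qubit_gates:
  assumes "distinct js" "inj_on a (set js)" "inj_on b (set js)" "a ` set js \<inter> b ` set js = {}"
    and "\<forall>j\<in>set js. a j < N \<and> b j < N \<and> unitary_smat 4 (M j)"
  shows "valid_layer N (map (\<lambda>j. ([a j, b j], M j)) js)"
  unfolding valid_layer_def valid_gate_def
proof (intro conjI allI impI ballI)
  fix i j assume "i < length (map (\<lambda>j. ([a j, b j], M j)) js)"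
    "j < length (map (\<lambda>j. ([a j, b j], M j)) js)" "i \<noteq> j"
  then have "js ! i \<in> set js" "js ! j \<in> set js" "js ! i \<noteq> js ! j"
    using assms(1) by (auto simp: nth_eq_iff_index_eq)
  then have "{a (js ! i), b (js ! i)} \<inter> {a (js ! j), b (js ! j)} = {}"
    using assms(2-4) by (auto simp: inj_on_eq_iff)
  then show "set (fst (map (\<lambda>j. ([a j, b j], M j)) js ! i)) \<inter>
             set (fst (map (\<lambda>j. ([a j, b j], M j)) js ! j)) = {}"
    using \<open>i < _\<close> \<open>j < _\<close> by simp
qed (use assms(4,5) in auto)

definition cnot :: smat where
  "cnot = (\<lambda>i j. if (i, j) \<in> {(0, 0), (1, 1), (2, 3), (3, 2)} then 1 else 0)"

lemma cnot_enc: "cnot (enc [p, q] x) (enc [p, q] y) = of_bool (y p = x p \<and> y q = (x q \<noteq> x p))"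
  unfolding cnot_def enc_two by (cases "x p"; cases "x q"; cases "y p"; cases "y q") simp_all

lemma unitary_cnot: "unitary_smat 4 cnot"
  unfolding unitary_smat_def all_lessThan_4 sum_lessThan_4 cnot_def by simp

definition cnot_layer :: "(nat \<Rightarrow> nat) \<Rightarrow> nat list \<Rightarrow> gate list" where
  "cnot_layer ctl qs = map (\<lambda>q. ([ctl q, q], cnot)) qs"

definition cnot_perm :: "(nat \<Rightarrow> nat) \<Rightarrow> nat list \<Rightarrow> bits \<Rightarrow> bits" where
  "cnot_perm ctl qs x = (\<lambda>q. if q \<in> set qs then x q \<noteq> x (ctl q) else x q)"

lemma layer_op_cnot_layer:
  assumes "distinct qs" "\<forall>q\<in>set qs. ctl q \<notin> set qs"
  shows "layer_op (cnot_layer ctl qs) = perm_op (cnot_perm ctl qs)"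
proof (intro ext)
  fix x y :: bits
  have "layer_op (cnot_layer ctl qs) x y =
    of_bool ((\<forall>q. q \<notin> (\<Union>j\<in>set qs. {ctl j, j}) \<longrightarrow> x q = y q) \<and>
             (\<forall>q\<in>set qs. y (ctl q) = x (ctl q) \<and> y q = (x q \<noteq> x (ctl q))))"
    unfolding cnot_layer_def layer_op_two_qubit_gates[OF assms(1)] cnot_enc
    by (simp add: prod_of_bool)
  also have "\<dots> = of_bool (y = cnot_perm ctl qs x)"
  proof (intro arg_cong[of _ _ of_bool] iffI)
    assume y: "(\<forall>q. q \<notin> (\<Union>j\<in>set qs. {ctl j, j}) \<longrightarrow> x q = y q) \<and>
               (\<forall>q\<in>set qs. y (ctl q) = x (ctl q) \<and> y q = (x q \<noteq> x (ctl q)))"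
    show "y = cnot_perm ctl qs x"
    proof
      fix q
      show "y q = cnot_perm ctl qs x q"
        using y unfolding cnot_perm_def by (cases "q \<in> set qs"; cases "q \<in> ctl ` set qs") auto
    qed
  qed (use assms(2) in \<open>auto simp: cnot_perm_def\<close>)
  finally show "layer_op (cnot_layer ctl qs) x y = perm_op (cnot_perm ctl qs) x y"
    unfolding perm_op_def .
qed

lemma cnot_perm_cnot_perm: "\<forall>q\<in>set qs. ctl q \<notin> set qs \<Longrightarrow> cnot_perm ctl qs (cnot_perm ctl qs x) = x"
  unfolding cnot_perm_def by auto

lemma cnot_perm_basis: "\<forall>q\<in>set qs. q < N \<Longrightarrow> x \<in> basis N \<Longrightarrow> cnot_perm ctl qs x \<in> basis N"
  unfolding cnot_perm_def basis_def by auto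

lemma valid_layer_cnot_layer:
  assumes "distinct qs" "inj_on ctl (set qs)" "\<forall>q\<in>set qs. ctl q \<notin> set qs \<and> ctl q < N \<and> q < N"
  shows "valid_layer N (cnot_layer ctl qs)"
  unfolding cnot_layer_def
  using assms unitary_cnot by (intro valid_layer_two_qubit_gates) auto

definition cphase :: "(nat \<Rightarrow> complex) \<Rightarrow> smat" where
  "cphase \<alpha> = (\<lambda>i j. if i = j then (if i = 2 then \<alpha> 0 else if i = 3 then \<alpha> 1 else 1) else 0)"

lemma cphase_enc:
  "cphase \<alpha> (enc [p, q] x) (enc [p, q] y) =
     (if y p = x p \<and> y q = x q then (if x p then \<alpha> (of_bool (x q)) else 1) else 0)"
  unfolding cphase_def enc_two by (cases "x p"; cases "x q"; cases "y p"; cases "y q") simp_all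

lemma unitary_cphase:
  "cnj (\<alpha> 0) * \<alpha> 0 = 1 \<Longrightarrow> cnj (\<alpha> 1) * \<alpha> 1 = 1 \<Longrightarrow> unitary_smat 4 (cphase \<alpha>)"
  unfolding unitary_smat_def all_lessThan_4 sum_lessThan_4 cphase_def by (simp add: mult.commute)

lemma layer_op_cphase_layer:
  assumes "distinct js"
  shows "layer_op (map (\<lambda>j. ([a j, b j], cphase (\<alpha> j))) js)
       = diag_op (\<lambda>x. \<Prod>j\<in>set js. if x (a j) then \<alpha> j (of_bool (x (b j))) else 1)"
proof (intro ext)
  fix x y :: bits
  note layer = layer_op_two_qubit_gates[OF assms, of a b "\<lambda>j. cphase (\<alpha> j)" x y]
  show "layer_op (map (\<lambda>j. ([a j, b j], cphase (\<alpha> j))) js) x y =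
        diag_op (\<lambda>x. \<Prod>j\<in>set js. if x (a j) then \<alpha> j (of_bool (x (b j))) else 1) x y"
  proof (cases "y = x")
    case True
    then show ?thesis unfolding layer diag_op_def cphase_enc by simp
  next
    case False
    then obtain q where q: "x q \<noteq> y q" by auto
    show ?thesis
    proof (cases "\<exists>j\<in>set js. q = a j \<or> q = b j")
      case True
      then obtain j where j: "j \<in> set js" "q = a j \<or> q = b j" by blast
      then have "cphase (\<alpha> j) (enc [a j, b j] x) (enc [a j, b j] y) = 0"
        using q unfolding cphase_enc by auto
      then have "(\<Prod>j\<in>set js. cphase (\<alpha> j) (enc [a j, b j] x) (enc [a j, b j] y)) = 0"
        using j(1) by (blast intro: prod_zero[OF finite_set])
      then show ?thesis
        using False unfolding layer diag_op_def by simp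
    next
      case False
      then have "\<not> (\<forall>q. q \<notin> (\<Union>j\<in>set js. {a j, b j}) \<longrightarrow> x q = y q)"
        using q by blast
      then show ?thesis
        using \<open>y \<noteq> x\<close> unfolding layer diag_op_def by (simp only: if_False)
    qed
  qed
qed

section \<open>Fan-out of the target qubit\<close>

definition fanout_rounds :: "nat \<Rightarrow> nat \<Rightarrow> nat \<Rightarrow> nat \<Rightarrow> ((nat \<Rightarrow> nat) \<times> nat list) list" where
  "fanout_rounds t n' n R =
     ((\<lambda>_. t), [n']) # map (\<lambda>r. ((\<lambda>q. q - 2 ^ r), [n' + 2 ^ r..<n' + min (2 ^ Suc r) n])) [0..<R]"

lemma fanout_rounds_Suc:
  "fanout_rounds t n' n (Suc R) =
     fanout_rounds t n' n R @ [((\<lambda>q. q - 2 ^ R), [n' + 2 ^ R..<n' + min (2 ^ Suc R) n])]"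
  by (simp add: fanout_rounds_def)

lemma fanout_round:
  assumes "t < n'" "1 \<le> n" "(ctl, qs) \<in> set (fanout_rounds t n' n R)"
  shows "distinct qs" "inj_on ctl (set qs)" "\<forall>q\<in>set qs. ctl q \<notin> set qs \<and> ctl q < n' + n \<and> q < n' + n"
  using assms by (auto simp: fanout_rounds_def inj_on_def)

definition copy_bit :: "nat \<Rightarrow> nat \<Rightarrow> nat \<Rightarrow> bits \<Rightarrow> bits" where
  "copy_bit t n' k z = (\<lambda>q. if n' \<le> q \<and> q < n' + k then z t else z q)"

definition fanout_layers :: "nat \<Rightarrow> nat \<Rightarrow> nat \<Rightarrow> nat \<Rightarrow> gate list list" where
  "fanout_layers t n' n R = map (case_prod cnot_layer) (fanout_rounds t n' n R)"

definition fanout_perms :: "nat \<Rightarrow> nat \<Rightarrow> nat \<Rightarrow> nat \<Rightarrow> (bits \<Rightarrow> bits) list" where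
  "fanout_perms t n' n R = map (case_prod cnot_perm) (fanout_rounds t n' n R)"

lemma valid_layer_fanout_layers:
  "t < n' \<Longrightarrow> 1 \<le> n \<Longrightarrow> L \<in> set (fanout_layers t n' n R) \<Longrightarrow> valid_layer (n' + n) L"
  unfolding fanout_layers_def using fanout_round by (auto intro!: valid_layer_cnot_layer)

lemma layer_ops_fanout_layers:
  "t < n' \<Longrightarrow> 1 \<le> n \<Longrightarrow> map layer_op (fanout_layers t n' n R) = map perm_op (fanout_perms t n' n R)"
  unfolding fanout_layers_def fanout_perms_def using fanout_round by (auto intro!: layer_op_cnot_layer)

lemma fanout_perms_basis:
  "t < n' \<Longrightarrow> 1 \<le> n \<Longrightarrow> f \<in> set (fanout_perms t n' n R) \<Longrightarrow> x \<in> basis (n' + n) \<Longrightarrow> f x \<in> basis (n' + n)"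
  unfolding fanout_perms_def using fanout_round by (auto intro!: cnot_perm_basis)

lemma fanout_perms_involution:
  "t < n' \<Longrightarrow> 1 \<le> n \<Longrightarrow> f \<in> set (fanout_perms t n' n R) \<Longrightarrow> f (f x) = x"
  unfolding fanout_perms_def using fanout_round by (auto intro!: cnot_perm_cnot_perm)

lemma fold_fanout_perms:
  assumes "t < n'" "1 \<le> n" "\<forall>q. n' \<le> q \<and> q < n' + n \<longrightarrow> \<not> z q"
  shows "fold (\<lambda>f. f) (fanout_perms t n' n R) z = copy_bit t n' (min (2 ^ R) n) z"
proof (induction R)
  case 0
  show ?case
    using assms by (auto simp: fanout_perms_def fanout_rounds_def cnot_perm_def copy_bit_def fun_eq_iff)
next
  case (Suc R)
  have "cnot_perm (\<lambda>q. q - 2 ^ R) [n' + 2 ^ R..<n' + min (2 ^ Suc R) n] (copy_bit t n' (min (2 ^ R) n) z)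
      = copy_bit t n' (min (2 ^ Suc R) n) z"
    using assms by (auto simp: cnot_perm_def copy_bit_def fun_eq_iff)
  then show ?case
    using Suc.IH by (simp add: fanout_perms_def fanout_rounds_Suc)
qed

section \<open>Simultaneous diagonalisation of commuting unitaries\<close>

lemma unitary_smat_2D:
  assumes "unitary_smat 2 B"
  shows "cnj (B 0 0) * B 0 0 + cnj (B 1 0) * B 1 0 = 1"
    "cnj (B 0 0) * B 0 1 + cnj (B 1 0) * B 1 1 = 0"
    "cnj (B 0 1) * B 0 0 + cnj (B 1 1) * B 1 0 = 0"
    "cnj (B 0 1) * B 0 1 + cnj (B 1 1) * B 1 1 = 1"
    "B 0 0 * cnj (B 0 0) + B 0 1 * cnj (B 0 1) = 1"
    "B 0 0 * cnj (B 1 0) + B 0 1 * cnj (B 1 1) = 0"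
    "B 1 0 * cnj (B 0 0) + B 1 1 * cnj (B 0 1) = 0"
    "B 1 0 * cnj (B 1 0) + B 1 1 * cnj (B 1 1) = 1"
  using assms unfolding unitary_smat_def all_lessThan_2 sum_lessThan_2 by simp_all

lemma unitary_smat_2_inner:
  assumes "unitary_smat 2 B"
  shows "cnj (B 0 0 * x0 + B 0 1 * x1) * (B 0 0 * y0 + B 0 1 * y1)
       + cnj (B 1 0 * x0 + B 1 1 * x1) * (B 1 0 * y0 + B 1 1 * y1) = cnj x0 * y0 + cnj x1 * y1"
proof -
  note B = unitary_smat_2D[OF assms]
  have "cnj (B 0 0 * x0 + B 0 1 * x1) * (B 0 0 * y0 + B 0 1 * y1)
      + cnj (B 1 0 * x0 + B 1 1 * x1) * (B 1 0 * y0 + B 1 1 * y1)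
     = cnj x0 * y0 * (cnj (B 0 0) * B 0 0 + cnj (B 1 0) * B 1 0)
     + cnj x0 * y1 * (cnj (B 0 0) * B 0 1 + cnj (B 1 0) * B 1 1)
     + cnj x1 * y0 * (cnj (B 0 1) * B 0 0 + cnj (B 1 1) * B 1 0)
     + cnj x1 * y1 * (cnj (B 0 1) * B 0 1 + cnj (B 1 1) * B 1 1)"
    by (simp add: algebra_simps)
  also have "\<dots> = cnj x0 * y0 + cnj x1 * y1"
    by (simp only: B) simp
  finally show ?thesis .
qed

definition adjoint :: "smat \<Rightarrow> smat" where
  "adjoint V = (\<lambda>i j. cnj (V j i))"

lemma unitary_adjoint: "unitary_smat d V \<Longrightarrow> unitary_smat d (adjoint V)"
  unfolding unitary_smat_def adjoint_def by simp

definition diag_conj :: "smat \<Rightarrow> (nat \<Rightarrow> complex) \<Rightarrow> smat" where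
  "diag_conj V e = (\<lambda>a b. \<Sum>k<2. V a k * e k * cnj (V b k))"

lemma smat_mult_diag_conj:
  assumes "unitary_smat 2 V"
  shows "smat_mult 2 (diag_conj V d) (diag_conj V e) = diag_conj V (\<lambda>k. d k * e k)"
proof (intro ext)
  fix a b
  note V = unitary_smat_2D[OF assms]
  have "smat_mult 2 (diag_conj V d) (diag_conj V e) a b
     = V a 0 * d 0 * e 0 * cnj (V b 0) * (cnj (V 0 0) * V 0 0 + cnj (V 1 0) * V 1 0)
     + V a 0 * d 0 * e 1 * cnj (V b 1) * (cnj (V 0 0) * V 0 1 + cnj (V 1 0) * V 1 1)
     + V a 1 * d 1 * e 0 * cnj (V b 0) * (cnj (V 0 1) * V 0 0 + cnj (V 1 1) * V 1 0)
     + V a 1 * d 1 * e 1 * cnj (V b 1) * (cnj (V 0 1) * V 0 1 + cnj (V 1 1) * V 1 1)"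
    unfolding smat_mult_def diag_conj_def sum_lessThan_2 by (simp add: algebra_simps)
  also have "\<dots> = diag_conj V (\<lambda>k. d k * e k) a b"
    unfolding diag_conj_def sum_lessThan_2 V by (simp add: algebra_simps)
  finally show "smat_mult 2 (diag_conj V d) (diag_conj V e) a b = diag_conj V (\<lambda>k. d k * e k) a b" .
qed

lemma diag_conj_one:
  "unitary_smat 2 V \<Longrightarrow> a < 2 \<Longrightarrow> b < 2 \<Longrightarrow> diag_conj V (\<lambda>_. 1) a b = smat_id a b"
  unfolding unitary_smat_def diag_conj_def smat_id_def by simp

lemma foldr_controlled_diag_conj:
  assumes "unitary_smat 2 V" "\<forall>i\<in>set is. \<forall>a<2. \<forall>b<2. U i a b = diag_conj V (L i) a b"
    and "a < 2" "b < 2"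
  shows "foldr (smat_mult 2) (map (\<lambda>i. if y (c i) then U i else smat_id) is) smat_id a b
       = diag_conj V (\<lambda>k. \<Prod>i\<leftarrow>is. if y (c i) then L i k else 1) a b"
  using assms(2-4)
proof (induction "is" arbitrary: a b)
  case Nil
  then show ?case by (simp add: diag_conj_one[OF assms(1)])
next
  case (Cons i "is")
  define D where "D = (\<lambda>k. if y (c i) then L i k else 1)"
  define P where "P = (\<lambda>k. \<Prod>i\<leftarrow>is. if y (c i) then L i k else 1)"
  have factor: "(if y (c i) then U i else smat_id) a' b' = diag_conj V D a' b'" if "a' < 2" "b' < 2" for a' b'
    using Cons.prems(1) that diag_conj_one[OF assms(1) that] unfolding D_def by auto
  have "foldr (smat_mult 2) (map (\<lambda>i. if y (c i) then U i else smat_id) (i # is)) smat_id a b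
      = smat_mult 2 (if y (c i) then U i else smat_id)
          (foldr (smat_mult 2) (map (\<lambda>i. if y (c i) then U i else smat_id) is) smat_id) a b"
    by simp
  also have "\<dots> = smat_mult 2 (diag_conj V D) (diag_conj V P) a b"
    unfolding smat_mult_def[of 2 "if y (c i) then U i else smat_id"] smat_mult_def[of 2 "diag_conj V D"]
    using Cons.prems by (intro sum.cong refl) (simp add: factor Cons.IH P_def)
  also have "\<dots> = diag_conj V (\<lambda>k. \<Prod>i\<leftarrow>i # is. if y (c i) then L i k else 1) a b"
    unfolding smat_mult_diag_conj[OF assms(1)] D_def P_def by (cases "y (c i)") simp_all
  finally show ?case .
qed

definition eigenpair :: "smat \<Rightarrow> complex \<Rightarrow> complex \<Rightarrow> complex \<Rightarrow> bool" where
  "eigenpair A v0 v1 l \<longleftrightarrow> A 0 0 * v0 + A 0 1 * v1 = l * v0 \<and> A 1 0 * v0 + A 1 1 * v1 = l * v1"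

lemma exists_normalizing_factor:
  fixes u0 u1 :: complex
  assumes "u0 \<noteq> 0 \<or> u1 \<noteq> 0"
  shows "\<exists>s. cnj (s * u0) * (s * u0) + cnj (s * u1) * (s * u1) = 1"
proof -
  define r where "r = (cmod u0)\<^sup>2 + (cmod u1)\<^sup>2"
  have "r > 0" using assms unfolding r_def by (auto simp: add_pos_nonneg add_nonneg_pos)
  define s where "s = complex_of_real (1 / sqrt r)"
  have "cnj (s * u0) * (s * u0) + cnj (s * u1) * (s * u1) = (cnj s * s) * (cnj u0 * u0 + cnj u1 * u1)"
    by (simp add: algebra_simps)
  also have "cnj u0 * u0 + cnj u1 * u1 = complex_of_real r"
    unfolding r_def of_real_add complex_norm_square by (simp add: mult.commute)
  also have "cnj s * s = complex_of_real (1 / r)"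
    unfolding s_def using \<open>r > 0\<close> by (simp add: power2_eq_square[symmetric] power_divide flip: of_real_power)
  finally show ?thesis
    using \<open>r > 0\<close> by (metis divide_self_if less_irrefl of_real_1 of_real_mult times_divide_eq_left mult_1)
qed

lemma exists_unit_eigenpair: "\<exists>v0 v1 l. cnj v0 * v0 + cnj v1 * v1 = 1 \<and> eigenpair A v0 v1 l"
proof -
  define a where "a = A 0 0"
  define b where "b = A 0 1"
  define c where "c = A 1 0"
  define d where "d = A 1 1"
  define l where "l = (a + d + csqrt ((a - d)\<^sup>2 + 4 * b * c)) / 2"
  have charpoly: "l * l - (a + d) * l + (a * d - b * c) = 0"
  proof -
    have "l * l - (a + d) * l + (a * d - b * c)
        = ((csqrt ((a - d)\<^sup>2 + 4 * b * c))\<^sup>2 - ((a - d)\<^sup>2 + 4 * b * c)) / 4"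
      unfolding l_def by (simp add: field_simps power2_eq_square)
    then show ?thesis by simp
  qed
  \<comment> \<open>As \<open>det (A - l I) = 0\<close>, the vector \<open>(b, l - a)\<close>, or else \<open>(l - d, c)\<close>, lies in the kernel
     of \<open>A - l I\<close>; if both vanish, \<open>A = l I\<close>.\<close>
  have "\<exists>u0 u1. (u0 \<noteq> 0 \<or> u1 \<noteq> 0) \<and> a * u0 + b * u1 = l * u0 \<and> c * u0 + d * u1 = l * u1"
  proof (cases "b \<noteq> 0 \<or> l - a \<noteq> 0")
    case True
    have "c * b + d * (l - a) = l * (l - a)" using charpoly by algebra
    moreover have "a * b + b * (l - a) = l * b" by algebra
    ultimately show ?thesis using True by blast
  next
    case b: False
    show ?thesis
    proof (cases "l - d \<noteq> 0 \<or> c \<noteq> 0")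
      case True
      have "a * (l - d) + b * c = l * (l - d)" using charpoly by algebra
      moreover have "c * (l - d) + d * c = l * c" by algebra
      ultimately show ?thesis using True by blast
    next
      case False
      then show ?thesis using b by (intro exI[of _ 1] exI[of _ 0]) simp
    qed
  qed
  then obtain u0 u1 where u: "u0 \<noteq> 0 \<or> u1 \<noteq> 0" "a * u0 + b * u1 = l * u0" "c * u0 + d * u1 = l * u1"
    by blast
  obtain s where "cnj (s * u0) * (s * u0) + cnj (s * u1) * (s * u1) = 1"
    using exists_normalizing_factor[OF u(1)] by blast
  moreover have "eigenpair A (s * u0) (s * u1) l"
    unfolding eigenpair_def a_def[symmetric] b_def[symmetric] c_def[symmetric] d_def[symmetric]
    using u(2,3)
    by (metis mult.left_commute distrib_left)
  ultimately show ?thesis by blast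
qed

definition su2 :: "complex \<Rightarrow> complex \<Rightarrow> smat" where
  "su2 v0 v1 = (\<lambda>a k. if a = 0 then (if k = 0 then v0 else - cnj v1) else (if k = 0 then v1 else cnj v0))"

lemma unitary_su2: "cnj v0 * v0 + cnj v1 * v1 = 1 \<Longrightarrow> unitary_smat 2 (su2 v0 v1)"
  unfolding unitary_smat_def all_lessThan_2 sum_lessThan_2 su2_def by (simp add: algebra_simps)

text \<open>\<open>B v\<close> is again an eigenvector of \<open>A\<close> for \<open>l\<close>; a non-diagonal \<open>A\<close> is not scalar,
  so that eigenspace is the line through \<open>v\<close>.\<close>
lemma eigenpair_of_commuting:
  assumes v: "cnj v0 * v0 + cnj v1 * v1 = 1" and A: "eigenpair A v0 v1 l"
    and nondiag: "A 0 1 \<noteq> 0 \<or> A 1 0 \<noteq> 0"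
    and commute: "\<forall>a<2. \<forall>b<2. smat_mult 2 A B a b = smat_mult 2 B A a b"
  shows "\<exists>\<mu>. eigenpair B v0 v1 \<mu>"
proof -
  have c: "A 0 0 * B 0 0 + A 0 1 * B 1 0 = B 0 0 * A 0 0 + B 0 1 * A 1 0"
    "A 0 0 * B 0 1 + A 0 1 * B 1 1 = B 0 0 * A 0 1 + B 0 1 * A 1 1"
    "A 1 0 * B 0 0 + A 1 1 * B 1 0 = B 1 0 * A 0 0 + B 1 1 * A 1 0"
    "A 1 0 * B 0 1 + A 1 1 * B 1 1 = B 1 0 * A 0 1 + B 1 1 * A 1 1"
    using commute unfolding all_lessThan_2 smat_mult_def sum_lessThan_2 by simp_all
  define w0 where "w0 = B 0 0 * v0 + B 0 1 * v1"
  define w1 where "w1 = B 1 0 * v0 + B 1 1 * v1"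
  have Aw: "eigenpair A w0 w1 l"
    using A c unfolding eigenpair_def w0_def w1_def by algebra
  have dependent: "v0 * w1 - v1 * w0 = 0"
  proof (rule ccontr)
    assume "v0 * w1 - v1 * w0 \<noteq> 0"
    moreover have "A 0 1 * (v0 * w1 - v1 * w0) = 0" "A 1 0 * (v0 * w1 - v1 * w0) = 0"
      using A Aw unfolding eigenpair_def by algebra+
    ultimately show False using nondiag by simp
  qed
  have "eigenpair B v0 v1 (cnj v0 * w0 + cnj v1 * w1)"
    using v dependent unfolding eigenpair_def w0_def[symmetric] w1_def[symmetric] by algebra
  then show ?thesis ..
qed

text \<open>A unitary preserves the orthogonal complement of an eigenvector, which is spanned by the
  second column of \<open>su2 v0 v1\<close>.\<close>
lemma unitary_diag_conj_su2:
  assumes B: "unitary_smat 2 B" and v: "cnj v0 * v0 + cnj v1 * v1 = 1"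
    and eig: "eigenpair B v0 v1 \<mu>"
  shows "\<exists>e. (\<forall>k<2. cnj (e k) * e k = 1) \<and> (\<forall>a<2. \<forall>b<2. B a b = diag_conj (su2 v0 v1) e a b)"
proof -
  define z0 where "z0 = B 0 0 * (- cnj v1) + B 0 1 * cnj v0"
  define z1 where "z1 = B 1 0 * (- cnj v1) + B 1 1 * cnj v0"
  have Bv: "B 0 0 * v0 + B 0 1 * v1 = \<mu> * v0" "B 1 0 * v0 + B 1 1 * v1 = \<mu> * v1"
    using eig unfolding eigenpair_def by auto
  have "cnj \<mu> * \<mu> * (cnj v0 * v0 + cnj v1 * v1) = cnj v0 * v0 + cnj v1 * v1"
    using unitary_smat_2_inner[OF B, of v0 v1 v0 v1] unfolding Bv by (simp add: algebra_simps)
  then have \<mu>_unit: "cnj \<mu> * \<mu> = 1"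
    using v by simp
  have "cnj \<mu> * (cnj v0 * z0 + cnj v1 * z1) = 0"
    using unitary_smat_2_inner[OF B, of v0 v1 "- cnj v1" "cnj v0"]
    unfolding Bv z0_def z1_def by (simp add: algebra_simps)
  then have vz: "cnj v0 * z0 + cnj v1 * z1 = 0"
    using \<mu>_unit by auto
  define \<nu> where "\<nu> = - v1 * z0 + v0 * z1"
  have z: "z0 = \<nu> * (- cnj v1)" "z1 = \<nu> * cnj v0"
    unfolding \<nu>_def using v vz by algebra+
  have "cnj \<nu> * \<nu> * (cnj v0 * v0 + cnj v1 * v1) = cnj v0 * v0 + cnj v1 * v1"
    using unitary_smat_2_inner[OF B, of "- cnj v1" "cnj v0" "- cnj v1" "cnj v0"]
    unfolding z0_def[symmetric] z1_def[symmetric] z by (simp add: algebra_simps)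
  then have \<nu>_unit: "cnj \<nu> * \<nu> = 1"
    using v by simp
  define e where "e = (\<lambda>k::nat. if k = 0 then \<mu> else \<nu>)"
  have "B 0 0 = v0 * \<mu> * cnj v0 + (- cnj v1) * \<nu> * (- v1)"
    "B 0 1 = v0 * \<mu> * cnj v1 + (- cnj v1) * \<nu> * v0"
    "B 1 0 = v1 * \<mu> * cnj v0 + cnj v0 * \<nu> * (- v1)"
    "B 1 1 = v1 * \<mu> * cnj v1 + cnj v0 * \<nu> * v0"
    using Bv z[unfolded z0_def z1_def] v by algebra+
  then have "\<forall>a<2. \<forall>b<2. B a b = diag_conj (su2 v0 v1) e a b"
    unfolding all_lessThan_2 diag_conj_def sum_lessThan_2 su2_def e_def by simp
  moreover have "\<forall>k<2. cnj (e k) * e k = 1"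
    using \<mu>_unit \<nu>_unit unfolding e_def by auto
  ultimately show ?thesis by blast
qed

lemma commuting_unitaries_diagonalizable:
  assumes unitary: "\<forall>i\<in>I. unitary_smat 2 (U i)"
    and commute: "\<forall>i\<in>I. \<forall>j\<in>I. \<forall>a<2. \<forall>b<2. smat_mult 2 (U i) (U j) a b = smat_mult 2 (U j) (U i) a b"
  shows "\<exists>V L. unitary_smat 2 V \<and> (\<forall>i\<in>I. \<forall>k<2. cnj (L i k) * L i k = 1) \<and>
           (\<forall>i\<in>I. \<forall>a<2. \<forall>b<2. U i a b = diag_conj V (L i) a b)"
proof (cases "\<exists>i0\<in>I. U i0 0 1 \<noteq> 0 \<or> U i0 1 0 \<noteq> 0")
  case True
  then obtain i0 where i0: "i0 \<in> I" "U i0 0 1 \<noteq> 0 \<or> U i0 1 0 \<noteq> 0" by blast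
  obtain v0 v1 l where v: "cnj v0 * v0 + cnj v1 * v1 = 1" and eig: "eigenpair (U i0) v0 v1 l"
    using exists_unit_eigenpair by blast
  have "\<forall>i\<in>I. \<exists>e. (\<forall>k<2. cnj (e k) * e k = 1) \<and> (\<forall>a<2. \<forall>b<2. U i a b = diag_conj (su2 v0 v1) e a b)"
  proof
    fix i assume i: "i \<in> I"
    obtain \<mu> where "eigenpair (U i) v0 v1 \<mu>"
      using eigenpair_of_commuting[OF v eig i0(2)] commute i0(1) i by blast
    then show "\<exists>e. (\<forall>k<2. cnj (e k) * e k = 1) \<and> (\<forall>a<2. \<forall>b<2. U i a b = diag_conj (su2 v0 v1) e a b)"
      using unitary_diag_conj_su2[OF _ v] unitary i by blast
  qed
  then show ?thesis
    using unitary_su2[OF v] by (metis bchoice)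
next
  case False
  have "\<forall>i\<in>I. \<forall>k<2. cnj (U i k k) * U i k k = 1"
    using False unitary_smat_2D(1,4) unitary unfolding all_lessThan_2 by fastforce
  moreover have "\<forall>i\<in>I. \<forall>a<2. \<forall>b<2. U i a b = diag_conj smat_id (\<lambda>k. U i k k) a b"
    using False unfolding all_lessThan_2 diag_conj_def sum_lessThan_2 smat_id_def by auto
  moreover have "unitary_smat 2 smat_id"
    unfolding unitary_smat_def all_lessThan_2 sum_lessThan_2 smat_id_def by simp
  ultimately show ?thesis by (intro exI[of _ smat_id] exI[of _ "\<lambda>i k. U i k k"]) simp
qed

definition phase_layer :: "nat \<Rightarrow> nat list \<Rightarrow> (nat \<Rightarrow> nat \<Rightarrow> complex) \<Rightarrow> gate list" where
  "phase_layer n' qs \<alpha> = map (\<lambda>j. ([qs ! j, n' + j], cphase (\<alpha> j))) [0..<length qs]"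

definition phase_factor :: "nat \<Rightarrow> nat list \<Rightarrow> (nat \<Rightarrow> nat \<Rightarrow> complex) \<Rightarrow> bits \<Rightarrow> complex" where
  "phase_factor n' qs \<alpha> x = (\<Prod>j<length qs. if x (qs ! j) then \<alpha> j (of_bool (x (n' + j))) else 1)"

lemma layer_op_phase_layer: "layer_op (phase_layer n' qs \<alpha>) = diag_op (phase_factor n' qs \<alpha>)"
  unfolding phase_layer_def phase_factor_def by (simp add: layer_op_cphase_layer atLeast0LessThan)

lemma valid_phase_layer:
  assumes "distinct qs" "set qs \<subseteq> {..<n'}" "length qs \<le> n"
    and "\<forall>j<length qs. \<forall>k<2. cnj (\<alpha> j k) * \<alpha> j k = 1"
  shows "valid_layer (n' + n) (phase_layer n' qs \<alpha>)"
  unfolding phase_layer_def using assms nth_mem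
  by (intro valid_layer_two_qubit_gates) (fastforce simp: inj_on_def nth_eq_iff_index_eq intro!: unitary_cphase)+

lemma phase_factor_copy_bit:
  assumes "set qs \<subseteq> {..<n'} - {t}" "length qs \<le> n"
  shows "phase_factor n' qs \<alpha> (copy_bit t n' n (z(t := b)))
       = (\<Prod>j<length qs. if z (qs ! j) then \<alpha> j (of_bool b) else 1)"
  unfolding phase_factor_def
proof (rule prod.cong[OF refl])
  fix j assume "j \<in> {..<length qs}"
  then have "qs ! j < n'" "qs ! j \<noteq> t" "j < n"
    using assms nth_mem by fastforce+
  then show "(if copy_bit t n' n (z(t := b)) (qs ! j)
              then \<alpha> j (of_bool (copy_bit t n' n (z(t := b)) (n' + j))) else 1)
           = (if z (qs ! j) then \<alpha> j (of_bool b) else 1)"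
    unfolding copy_bit_def by simp
qed

text \<open>\<open>circuit_op\<close> applies the last layer first: \<open>V\<^sup>*\<close> on the target, the fan-out of the target
  into the ancillae, the phases, the inverse fan-out, and finally \<open>V\<close>.\<close>
definition fanout_phase_circuit ::
    "nat \<Rightarrow> nat \<Rightarrow> nat \<Rightarrow> nat \<Rightarrow> smat \<Rightarrow> nat list \<Rightarrow> (nat \<Rightarrow> nat \<Rightarrow> complex) \<Rightarrow> gate list list" where
  "fanout_phase_circuit t n' n R V qs \<alpha> =
     [[([t], V)]] @ fanout_layers t n' n R @ [phase_layer n' qs \<alpha>] @
     rev (fanout_layers t n' n R) @ [[([t], adjoint V)]]"

lemma length_fanout_phase_circuit: "length (fanout_phase_circuit t n' n R V qs \<alpha>) = 2 * R + 5"
  by (simp add: fanout_phase_circuit_def fanout_layers_def fanout_rounds_def)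

lemma valid_fanout_phase_circuit:
  assumes "t < n'" "1 \<le> n" "unitary_smat 2 V" "distinct qs" "set qs \<subseteq> {..<n'}" "length qs \<le> n"
    and "\<forall>j<length qs. \<forall>k<2. cnj (\<alpha> j k) * \<alpha> j k = 1"
  shows "valid_circuit (n' + n) (fanout_phase_circuit t n' n R V qs \<alpha>)"
  using assms valid_layer_fanout_layers[OF assms(1,2)] valid_phase_layer[OF assms(4-7)] unitary_adjoint
  by (auto simp: fanout_phase_circuit_def valid_circuit_def intro: valid_layer_single_qubit)

lemma apply_op_fanout_phase_circuit_sum:
  assumes "t < n'" "1 \<le> n" "x \<in> basis (n' + n)"
  shows "apply_op (n' + n) (circuit_op (n' + n) (fanout_phase_circuit t n' n R V qs \<alpha>)) v x
       = (\<Sum>k\<in>UNIV. V (of_bool (x t)) (of_bool k) *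
            (phase_factor n' qs \<alpha> (fold (\<lambda>f. f) (fanout_perms t n' n R) (x(t := k))) *
             (\<Sum>l\<in>UNIV. adjoint V (of_bool k) (of_bool l) * v (x(t := l)))))"
proof -
  define N where "N = n' + n"
  define fs where "fs = fanout_perms t n' n R"
  define Ps where "Ps = map perm_op fs @ diag_op (phase_factor n' qs \<alpha>) # map perm_op (rev fs)"
  define W where "W = apply_op N (on_qubit t (\<lambda>_. adjoint V)) v"
  have t: "t < N" and x: "x \<in> basis N"
    using assms unfolding N_def by auto
  have "map layer_op (fanout_phase_circuit t n' n R V qs \<alpha>) = on_qubit t (\<lambda>_. V) # Ps @ [on_qubit t (\<lambda>_. adjoint V)]"
    unfolding fanout_phase_circuit_def Ps_def fs_def
    by (simp add: layer_ops_fanout_layers[OF assms(1,2)] layer_op_phase_layer layer_op_single_qubit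
        rev_map[symmetric])
  then have "apply_op N (circuit_op N (fanout_phase_circuit t n' n R V qs \<alpha>)) v x
      = apply_op N (on_qubit t (\<lambda>_. V)) (apply_op N (op_prod N (Ps @ [on_qubit t (\<lambda>_. adjoint V)])) v) x"
    unfolding circuit_op_def by (simp add: apply_op_op_prod_Cons)
  also have "\<dots> = apply_op N (on_qubit t (\<lambda>_. V)) (apply_op N (op_prod N Ps) W) x"
    unfolding W_def
    by (intro apply_op_cong) (simp add: apply_op_op_prod_append apply_op_op_prod_Cons apply_op_op_prod_Nil
        cong: apply_op_cong)
  also have "\<dots> = (\<Sum>k\<in>UNIV. V (of_bool (x t)) (of_bool k) *
                   (phase_factor n' qs \<alpha> (fold (\<lambda>f. f) fs (x(t := k))) * W (x(t := k))))"
    unfolding Ps_def using t x fanout_perms_basis[OF assms(1,2)] fanout_perms_involution[OF assms(1,2)]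
    by (simp add: apply_op_on_qubit apply_op_diag_op_conj_perms basis_fun_upd fs_def N_def)
  finally show ?thesis
    using t x by (simp add: W_def apply_op_on_qubit basis_fun_upd N_def fs_def)
qed

lemma apply_op_fanout_phase_circuit:
  assumes "t < n'" "1 \<le> n" "n \<le> 2 ^ R" "set qs \<subseteq> {..<n'} - {t}" "length qs \<le> n"
    and x: "x \<in> basis (n' + n)"
  shows "apply_op (n' + n) (circuit_op (n' + n) (fanout_phase_circuit t n' n R V qs \<alpha>)) (with_ancillae n' n \<psi>) x
       = with_ancillae n' n (apply_op n' (on_qubit t
           (\<lambda>y. diag_conj V (\<lambda>k. \<Prod>j<length qs. if y (qs ! j) then \<alpha> j k else 1))) \<psi>) x"
proof (cases "\<forall>i\<in>{n'..<n' + n}. \<not> x i")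
  case False
  then have "with_ancillae n' n \<psi> (x(t := l)) = 0" for l
    using assms(1) unfolding with_ancillae_def by auto
  then show ?thesis
    using False unfolding apply_op_fanout_phase_circuit_sum[OF assms(1,2) x] with_ancillae_def
    by (simp only: if_False mult_zero_right sum.neutral_const)
next
  case True
  have "fold (\<lambda>f. f) (fanout_perms t n' n R) (x(t := k)) = copy_bit t n' n (x(t := k))" for k
    using fold_fanout_perms[OF assms(1,2), of "x(t := k)" R] True assms(1,3) by (simp add: min_absorb2)
  moreover have "with_ancillae n' n \<psi> (x(t := l)) = \<psi> (x(t := l))" for l
    using True assms(1) unfolding with_ancillae_def by auto
  ultimately show ?thesis
    using True basis_of_ancillae_zero[OF x True] assms(1)
    unfolding apply_op_fanout_phase_circuit_sum[OF assms(1,2) x]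
    by (simp add: phase_factor_copy_bit[OF assms(4,5)] apply_op_on_qubit with_ancillae_def UNIV_bool
        diag_conj_def adjoint_def sum_lessThan_2 algebra_simps)
qed

lemma apply_op_controlled_gates:
  assumes "t < N" "y \<in> basis N" "\<forall>i\<in>set is. c i \<noteq> t" "unitary_smat 2 V"
    and "\<forall>i\<in>set is. \<forall>a<2. \<forall>b<2. U i a b = diag_conj V (L i) a b"
  shows "apply_op N (op_prod N (map (\<lambda>i. cgate_op (c i) t (U i)) is)) \<psi> y
       = apply_op N (on_qubit t (\<lambda>y. diag_conj V (\<lambda>k. \<Prod>i\<leftarrow>is. if y (c i) then L i k else 1))) \<psi> y"
proof -
  have "map (\<lambda>i. cgate_op (c i) t (U i)) is = map (on_qubit t) (map (\<lambda>i y. if y (c i) then U i else smat_id) is)"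
    using assms(3) by (simp add: cgate_op_eq_on_qubit)
  then have "apply_op N (op_prod N (map (\<lambda>i. cgate_op (c i) t (U i)) is)) \<psi> y
    = apply_op N (on_qubit t (\<lambda>y. foldr (smat_mult 2)
        (map (\<lambda>A. A y) (map (\<lambda>i y. if y (c i) then U i else smat_id) is)) smat_id)) \<psi> y"
    using assms(3) by (simp only:) (rule apply_op_op_prod_on_qubit[OF assms(1,2)], auto)
  also have "\<dots> = apply_op N (on_qubit t (\<lambda>y. diag_conj V (\<lambda>k. \<Prod>i\<leftarrow>is. if y (c i) then L i k else 1))) \<psi> y"
    by (rule apply_op_on_qubit_cong[OF assms(1,2)]) (simp add: foldr_controlled_diag_conj[OF assms(4,5)] comp_def)
  finally show ?thesis .
qed

lemma embeds_controlled_gates: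
  assumes t: "t < n'" and n: "1 \<le> n" "n \<le> 2 ^ R" and controls: "\<forall>i\<in>{1..n}. c i < n' \<and> c i \<noteq> t"
    and V: "unitary_smat 2 V" and U: "\<forall>i\<in>{1..n}. \<forall>a<2. \<forall>b<2. U i a b = diag_conj V (L i) a b"
    and qs: "distinct qs" "set qs = c ` {1..n}"
    and \<alpha>: "\<alpha> = (\<lambda>j k. \<Prod>i\<in>{i\<in>{1..n}. c i = qs ! j}. L i k)"
  shows "embeds n' (op_prod n' (map (\<lambda>i. cgate_op (c i) t (U i)) (rev [1..<n+1])))
           n (circuit_op (n' + n) (fanout_phase_circuit t n' n R V qs \<alpha>))"
  unfolding embeds_def
proof (intro allI ballI)
  fix \<psi> x assume x: "x \<in> basis (n' + n)"
  have "length qs \<le> n"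
    using qs card_image_le[of "{1..n}" c] by (simp add: distinct_card[symmetric])
  have grouped: "(\<Prod>i\<leftarrow>rev [1..<n+1]. if y (c i) then L i k else 1)
               = (\<Prod>j<length qs. if y (qs ! j) then \<alpha> j k else 1)" for y k
  proof -
    have "(\<Prod>i\<leftarrow>rev [1..<n+1]. if y (c i) then L i k else 1) = (\<Prod>i\<in>{1..n}. if y (c i) then L i k else 1)"
      by (simp add: prod.distinct_set_conv_list[symmetric] atLeastLessThanSuc_atLeastAtMost del: upt_Suc)
    also have "\<dots> = (\<Prod>j<length qs. if y (qs ! j) then \<alpha> j k else 1)"
      unfolding \<alpha> by (rule prod_group_by[OF _ qs]) simp
    finally show ?thesis .
  qed
  have gates: "apply_op n' (op_prod n' (map (\<lambda>i. cgate_op (c i) t (U i)) (rev [1..<n+1]))) \<psi> y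
      = apply_op n' (on_qubit t
          (\<lambda>y. diag_conj V (\<lambda>k. \<Prod>j<length qs. if y (qs ! j) then \<alpha> j k else 1))) \<psi> y"
    if "y \<in> basis n'" for y
    unfolding grouped[symmetric]
    by (rule apply_op_controlled_gates[OF t that _ V]) (use controls U in auto)
  have "set qs \<subseteq> {..<n'} - {t}"
    using qs(2) controls by auto
  then have "apply_op (n' + n) (circuit_op (n' + n) (fanout_phase_circuit t n' n R V qs \<alpha>))
               (with_ancillae n' n \<psi>) x
      = with_ancillae n' n (apply_op n' (on_qubit t
          (\<lambda>y. diag_conj V (\<lambda>k. \<Prod>j<length qs. if y (qs ! j) then \<alpha> j k else 1))) \<psi>) x"
    by (rule apply_op_fanout_phase_circuit[OF t n _ \<open>length qs \<le> n\<close> x])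
  also have "\<dots> = with_ancillae n' n
      (apply_op n' (op_prod n' (map (\<lambda>i. cgate_op (c i) t (U i)) (rev [1..<n+1]))) \<psi>) x"
    by (rule with_ancillae_cong[OF x]) (rule gates[symmetric])
  finally show "apply_op (n' + n) (circuit_op (n' + n) (fanout_phase_circuit t n' n R V qs \<alpha>))
               (with_ancillae n' n \<psi>) x
      = with_ancillae n' n (apply_op n' (op_prod n' (map (\<lambda>i. cgate_op (c i) t (U i)) (rev [1..<n+1]))) \<psi>) x" .
qed

lemma controlled_gates_circuit:
  assumes t: "t < n'" and n: "1 \<le> n" "n \<le> 2 ^ R" and controls: "\<forall>i\<in>{1..n}. c i < n' \<and> c i \<noteq> t"
    and V: "unitary_smat 2 V" and L: "\<forall>i\<in>{1..n}. \<forall>k<2. cnj (L i k) * L i k = 1"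
    and U: "\<forall>i\<in>{1..n}. \<forall>a<2. \<forall>b<2. U i a b = diag_conj V (L i) a b"
  shows "\<exists>Ls. valid_circuit (n' + n) Ls \<and> length Ls = 2 * R + 5 \<and>
           embeds n' (op_prod n' (map (\<lambda>i. cgate_op (c i) t (U i)) (rev [1..<n+1]))) n (circuit_op (n' + n) Ls)"
proof -
  define qs where "qs = sorted_list_of_set (c ` {1..n})"
  \<comment> \<open>Gates sharing a control qubit cannot share a layer, so the phases of all \<open>U i\<close> with
     control \<open>qs ! j\<close> are multiplied into a single controlled-phase gate.\<close>
  define \<alpha> where "\<alpha> = (\<lambda>j k. \<Prod>i\<in>{i\<in>{1..n}. c i = qs ! j}. L i k)"
  have qs: "distinct qs" "set qs = c ` {1..n}" "length qs \<le> n"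
    unfolding qs_def by (auto simp: length_sorted_list_of_set intro: card_image_le[THEN order_trans])
  have "valid_circuit (n' + n) (fanout_phase_circuit t n' n R V qs \<alpha>)"
    using t n V qs controls L unfolding \<alpha>_def
    by (intro valid_fanout_phase_circuit) (auto simp: prod.distrib[symmetric] intro!: prod.neutral)
  moreover have "embeds n' (op_prod n' (map (\<lambda>i. cgate_op (c i) t (U i)) (rev [1..<n+1])))
                  n (circuit_op (n' + n) (fanout_phase_circuit t n' n R V qs \<alpha>))"
    using t n controls V U qs(1,2) \<alpha>_def by (rule embeds_controlled_gates)
  ultimately show ?thesis
    using length_fanout_phase_circuit by blast
qed

theorem proposition4:
  "\<exists>C::real. C > 0 \<and>
    (\<forall>n::nat. \<forall>n'::nat. \<forall>t::nat. \<forall>c::nat \<Rightarrow> nat. \<forall>U::nat \<Rightarrow> smat.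
      n \<ge> 2 \<longrightarrow> t < n' \<longrightarrow>
      (\<forall>i\<in>{1..n}. c i < n' \<and> c i \<noteq> t) \<longrightarrow>
      (\<forall>i\<in>{1..n}. unitary_smat 2 (U i)) \<longrightarrow>
      (\<forall>i\<in>{1..n}. \<forall>j\<in>{1..n}. \<forall>a<2. \<forall>b<2.
          smat_mult 2 (U i) (U j) a b = smat_mult 2 (U j) (U i) a b) \<longrightarrow>
      (\<exists>m::nat. \<exists>Ls::gate list list.
          real m \<le> C * real n \<and>
          valid_circuit (n' + m) Ls \<and>
          real (length Ls) \<le> C * log 2 (real n) \<and>
          embeds n' (op_prod n' (map (\<lambda>i. cgate_op (c i) t (U i)) (rev [1..<n+1])))
                 m (circuit_op (n' + m) Ls)))"
proof (rule exI[of _ 9], intro conjI allI impI)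
  show "(9::real) > 0" by simp
next
  fix n n' t :: nat and c :: "nat \<Rightarrow> nat" and U :: "nat \<Rightarrow> smat"
  assume n: "n \<ge> 2" and t: "t < n'" and controls: "\<forall>i\<in>{1..n}. c i < n' \<and> c i \<noteq> t"
    and unitary: "\<forall>i\<in>{1..n}. unitary_smat 2 (U i)"
    and commute: "\<forall>i\<in>{1..n}. \<forall>j\<in>{1..n}. \<forall>a<2. \<forall>b<2. smat_mult 2 (U i) (U j) a b = smat_mult 2 (U j) (U i) a b"
  obtain V L where V: "unitary_smat 2 V" and L: "\<forall>i\<in>{1..n}. \<forall>k<2. cnj (L i k) * L i k = 1"
    and U: "\<forall>i\<in>{1..n}. \<forall>a<2. \<forall>b<2. U i a b = diag_conj V (L i) a b"
    using commuting_unitaries_diagonalizable[OF unitary commute] by blast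
  obtain R where R: "2 ^ R \<le> n" "n < 2 ^ Suc R"
    using ex_power_ivl1[of 2 n] n by auto
  have "1 \<le> n" "n \<le> 2 ^ Suc R"
    using n R(2) by auto
  then obtain Ls where Ls: "valid_circuit (n' + n) Ls" "length Ls = 2 * Suc R + 5"
    "embeds n' (op_prod n' (map (\<lambda>i. cgate_op (c i) t (U i)) (rev [1..<n+1]))) n (circuit_op (n' + n) Ls)"
    using controlled_gates_circuit[OF t _ _ controls V L U] by blast
  have "real R \<le> log 2 n" "1 \<le> log 2 n"
    using le_log2_of_power[OF R(1)] le_log2_of_power[of 1 n] n by auto
  then have "real (length Ls) \<le> 9 * log 2 (real n)"
    using Ls(2) by simp
  then show "\<exists>m Ls. real m \<le> 9 * real n \<and> valid_circuit (n' + m) Ls \<and>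
      real (length Ls) \<le> 9 * log 2 (real n) \<and>
      embeds n' (op_prod n' (map (\<lambda>i. cgate_op (c i) t (U i)) (rev [1..<n+1]))) m (circuit_op (n' + m) Ls)"
    using Ls(1,3) by (intro exI[of _ n] exI[of _ Ls]) simp
qed

end
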